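(* Let $n\ge 4$ and let $D_n$ be the tree on vertex set $\{1,\ldots,n\}$ with edges $\{1,3\}$, $\{2,3\}$ and $\{i,i+1\}$ for $3\le i\le n-1$, with adjacency matrix $A$; let $W(D_n)=[e_n,Ae_n,\ldots,A^{n-1}e_n]$ and let $\hat W(D_n)$ be obtained from $W(D_n)$ by deleting the first row and the last column. Let $B$ be the $(n-1)\times(n-1)$ tridiagonal matrix with zero diagonal, $B_{1,2}=1$, $B_{2,1}=2$, and $B_{i,i+1}=B_{i+1,i}=1$ for $2\le i\le n-2$, all other entries $0$. Then $\hat W(D_n)=W(B)$, where $W(B)=[e_{n-1},Be_{n-1},\ldots,B^{n-2}e_{n-1}]$.
   Context: $e_m$ denotes the all-ones vector of length $m$. For an $m\times m$ matrix $M$, $W(M)=[e_m,Me_m,\ldots,M^{m-1}e_m]$. *)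

theory Defs
  imports "Jordan_Normal_Form.Matrix"
begin

(* Indices are 0-based: vertex k of the paper is index k-1 here. *)

definition ones_vec :: "nat \<Rightarrow> int vec" where
  "ones_vec m = vec m (\<lambda>_. 1)"

definition walk_matrix :: "int mat \<Rightarrow> int mat" where
  "walk_matrix M = (let m = dim_row M in
     mat m m (\<lambda>(i,j). ((M ^\<^sub>m j) *\<^sub>v ones_vec m) $ i))"

definition D_adj :: "nat \<Rightarrow> int mat" where
  "D_adj n = mat n n (\<lambda>(i,j).
     let a = i + 1; b = j + 1 in
     if {a,b} = {1,3} \<or> {a,b} = {2,3} \<or> (\<exists>k. 3 \<le> k \<and> k \<le> n - 1 \<and> {a,b} = {k, k+1})
     then 1 else 0)"

definition hat_W :: "int mat \<Rightarrow> int mat" where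
  "hat_W W = mat (dim_row W - 1) (dim_col W - 1) (\<lambda>(i,j). W $$ (i+1, j))"

definition B_mat :: "nat \<Rightarrow> int mat" where
  "B_mat n = mat (n-1) (n-1) (\<lambda>(i,j).
     let a = i + 1; b = j + 1 in
     if a = 1 \<and> b = 2 then 1
     else if a = 2 \<and> b = 1 then 2
     else if (2 \<le> a \<and> a \<le> n - 2 \<and> b = a + 1) \<or> (2 \<le> b \<and> b \<le> n - 2 \<and> a = b + 1) then 1
     else 0)"

end

theory Submission imports Defs begin

text \<open>Vertices 1 and 2 of \<open>D\<^sub>n\<close> are twins: both have the single neighbour 3. Hence the
  vectors with equal first two coordinates are invariant under \<open>A\<close>, and on them deleting the
  first coordinate turns \<open>A\<close> into \<open>B\<close>, the quotient matrix in which vertex 3 sees the merged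
  twin class with weight 2. Since \<open>e\<^sub>n\<close> lies in that invariant set, deleting the first
  coordinate of \<open>A\<^sup>j e\<^sub>n\<close> gives \<open>B\<^sup>j e\<^sub>n\<^sub>-\<^sub>1\<close> for every \<open>j\<close>.\<close>

lemma pow_mat_Suc_mult_mat_vec:
  assumes "A \<in> carrier_mat n n" "v \<in> carrier_vec n"
  shows "A ^\<^sub>m Suc j *\<^sub>v v = A ^\<^sub>m j *\<^sub>v (A *\<^sub>v v)"
  using assms by (simp add: assoc_mult_mat_vec[of _ n n _ n])

lemma pow_mat_mult_vec_intertwine:
  fixes A B :: "'a :: semiring_1 mat"
  assumes A: "A \<in> carrier_mat n n" and B: "B \<in> carrier_mat m m"
    and f: "\<And>x. x \<in> carrier_vec n \<Longrightarrow> f x \<in> carrier_vec m"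
    and invariant: "\<And>x. x \<in> carrier_vec n \<Longrightarrow> P x \<Longrightarrow> P (A *\<^sub>v x)"
    and intertwine: "\<And>x. x \<in> carrier_vec n \<Longrightarrow> P x \<Longrightarrow> f (A *\<^sub>v x) = B *\<^sub>v f x"
    and x: "x \<in> carrier_vec n" "P x"
  shows "f (A ^\<^sub>m j *\<^sub>v x) = B ^\<^sub>m j *\<^sub>v f x"
  using x
proof (induction j arbitrary: x)
  case 0
  then show ?case using A B f by simp
next
  case (Suc j)
  have Ax: "A *\<^sub>v x \<in> carrier_vec n" "P (A *\<^sub>v x)"
    using A Suc.prems invariant by auto
  have "f (A ^\<^sub>m Suc j *\<^sub>v x) = f (A ^\<^sub>m j *\<^sub>v (A *\<^sub>v x))"
    using A Suc.prems by (simp only: pow_mat_Suc_mult_mat_vec)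
  also have "\<dots> = B ^\<^sub>m j *\<^sub>v (B *\<^sub>v f x)"
    using Suc.IH[OF Ax] intertwine Suc.prems by simp
  also have "\<dots> = B ^\<^sub>m Suc j *\<^sub>v f x"
    using B f Suc.prems by (simp only: pow_mat_Suc_mult_mat_vec)
  finally show ?case .
qed

lemma mult_mat_vec_nth_sparse:
  assumes "i < dim_row A" "dim_vec x = dim_col A" "K \<subseteq> {..<dim_col A}"
    and "\<And>k. k < dim_col A \<Longrightarrow> k \<notin> K \<Longrightarrow> A $$ (i, k) = 0"
  shows "(A *\<^sub>v x) $ i = (\<Sum>k\<in>K. A $$ (i, k) * x $ k)"
proof -
  have "(A *\<^sub>v x) $ i = (\<Sum>k\<in>{0..<dim_col A}. A $$ (i, k) * x $ k)"
    using assms(1,2) by (simp add: scalar_prod_def)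
  also have "\<dots> = (\<Sum>k\<in>K. A $$ (i, k) * x $ k)"
    using assms(3,4) by (intro sum.mono_neutral_right) auto
  finally show ?thesis .
qed

lemma D_adj_carrier: "D_adj n \<in> carrier_mat n n"
  unfolding D_adj_def by simp

lemma B_mat_carrier: "B_mat n \<in> carrier_mat (n - 1) (n - 1)"
  unfolding B_mat_def by simp

lemma D_adj_index:
  assumes "i < n" "k < n"
  shows "D_adj n $$ (i, k) =
    (if (i \<le> 1 \<and> k = 2) \<or> (i = 2 \<and> k \<le> 1) \<or> (2 \<le> i \<and> k = i + 1) \<or> (2 \<le> k \<and> i = k + 1)
     then 1 else 0)"
proof -
  have "({i+1, k+1} = {1,3} \<or> {i+1, k+1} = {2,3} \<or> (\<exists>m. 3 \<le> m \<and> m \<le> n - 1 \<and> {i+1, k+1} = {m, m+1}))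
    \<longleftrightarrow> (i \<le> 1 \<and> k = 2) \<or> (i = 2 \<and> k \<le> 1) \<or> (2 \<le> i \<and> k = i + 1) \<or> (2 \<le> k \<and> i = k + 1)"
  proof
    assume "(i \<le> 1 \<and> k = 2) \<or> (i = 2 \<and> k \<le> 1) \<or> (2 \<le> i \<and> k = i + 1) \<or> (2 \<le> k \<and> i = k + 1)"
    then consider "(i \<le> 1 \<and> k = 2) \<or> (i = 2 \<and> k \<le> 1)" | "2 \<le> i" "k = i + 1" | "2 \<le> k" "i = k + 1"
      by blast
    then show "{i+1, k+1} = {1,3} \<or> {i+1, k+1} = {2,3} \<or> (\<exists>m. 3 \<le> m \<and> m \<le> n - 1 \<and> {i+1, k+1} = {m, m+1})"
    proof cases
      case 1
      then show ?thesis by (auto simp: doubleton_eq_iff)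
    next
      case 2
      then show ?thesis using assms by (intro disjI2 exI[of _ "i + 1"]) auto
    next
      case 3
      then show ?thesis using assms by (intro disjI2 exI[of _ "k + 1"]) auto
    qed
  qed (auto simp: doubleton_eq_iff)
  then show ?thesis
    using assms unfolding D_adj_def by (simp add: Let_def)
qed

lemma B_mat_index:
  assumes "i < n - 1" "k < n - 1"
  shows "B_mat n $$ (i, k) =
    (if i = 0 \<and> k = 1 then 1 else if i = 1 \<and> k = 0 then 2
     else if (1 \<le> i \<and> k = i + 1) \<or> (1 \<le> k \<and> i = k + 1) then 1 else 0)"
  using assms unfolding B_mat_def by (auto simp: Let_def)

lemma D_adj_mult_vec_nth:
  assumes "4 \<le> n" "x \<in> carrier_vec n" "i < n"
  shows "(D_adj n *\<^sub>v x) $ i =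
    (if i \<le> 1 then x $ 2
     else if i = 2 then x $ 0 + x $ 1 + x $ 3
     else x $ (i - 1) + (if i + 1 < n then x $ (i + 1) else 0))"
proof -
  have row: "(D_adj n *\<^sub>v x) $ i = (\<Sum>k\<in>K. D_adj n $$ (i, k) * x $ k)"
    if "K \<subseteq> {..<n}" "\<And>k. k < n \<Longrightarrow> k \<notin> K \<Longrightarrow> D_adj n $$ (i, k) = 0" for K
    using mult_mat_vec_nth_sparse[of i "D_adj n" x K] D_adj_carrier[of n] assms that by simp
  consider "i \<le> 1" | "i = 2" | "3 \<le> i" "i + 1 < n" | "3 \<le> i" "i = n - 1"
    using assms by linarith
  then show ?thesis
  proof cases
    case 1
    then show ?thesis using assms by (subst row[of "{2}"]) (auto simp: D_adj_index)
  next
    case 2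
    then show ?thesis using assms by (subst row[of "{0, 1, 3}"]) (auto simp: D_adj_index)
  next
    case 3
    then show ?thesis using assms by (subst row[of "{i - 1, i + 1}"]) (auto simp: D_adj_index)
  next
    case 4
    then show ?thesis using assms by (subst row[of "{i - 1}"]) (auto simp: D_adj_index)
  qed
qed

lemma B_mat_mult_vec_nth:
  assumes "4 \<le> n" "y \<in> carrier_vec (n - 1)" "i < n - 1"
  shows "(B_mat n *\<^sub>v y) $ i =
    (if i = 0 then y $ 1
     else if i = 1 then 2 * y $ 0 + y $ 2
     else y $ (i - 1) + (if i + 2 < n then y $ (i + 1) else 0))"
proof -
  have row: "(B_mat n *\<^sub>v y) $ i = (\<Sum>k\<in>K. B_mat n $$ (i, k) * y $ k)"
    if "K \<subseteq> {..<n - 1}" "\<And>k. k < n - 1 \<Longrightarrow> k \<notin> K \<Longrightarrow> B_mat n $$ (i, k) = 0" for K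
    using mult_mat_vec_nth_sparse[of i "B_mat n" y K] B_mat_carrier[of n] assms that by simp
  consider "i = 0" | "i = 1" | "2 \<le> i" "i + 2 < n" | "2 \<le> i" "i = n - 2"
    using assms by linarith
  then show ?thesis
  proof cases
    case 1
    then show ?thesis using assms by (subst row[of "{1}"]) (auto simp: B_mat_index)
  next
    case 2
    then show ?thesis using assms by (subst row[of "{0, 2}"]) (auto simp: B_mat_index)
  next
    case 3
    then show ?thesis using assms by (subst row[of "{i - 1, i + 1}"]) (auto simp: B_mat_index)
  next
    case 4
    then show ?thesis using assms by (subst row[of "{i - 1}"]) (auto simp: B_mat_index)
  qed
qed

lemma D_adj_mult_vec_twins:
  assumes "4 \<le> n" "x \<in> carrier_vec n"
  shows "(D_adj n *\<^sub>v x) $ 0 = (D_adj n *\<^sub>v x) $ 1"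
  using assms by (simp add: D_adj_mult_vec_nth)

lemma vec_last_D_adj_mult_vec:
  assumes n: "4 \<le> n" and x: "x \<in> carrier_vec n" and twins: "x $ 0 = x $ 1"
  shows "vec_last (D_adj n *\<^sub>v x) (n - 1) = B_mat n *\<^sub>v vec_last x (n - 1)"
proof (rule eq_vecI)
  fix i
  assume "i < dim_vec (B_mat n *\<^sub>v vec_last x (n - 1))"
  then have i: "i < n - 1"
    using B_mat_carrier[of n] by simp
  have last: "vec_last v (n - 1) $ k = v $ Suc k" if "dim_vec v = n" "k < n - 1" for v :: "int vec" and k
    using that n unfolding vec_last_def by simp
  have "vec_last (D_adj n *\<^sub>v x) (n - 1) $ i = (D_adj n *\<^sub>v x) $ Suc i"
    using last D_adj_carrier[of n] i by simp
  moreover have "(B_mat n *\<^sub>v vec_last x (n - 1)) $ i =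
    (if i = 0 then x $ 2 else if i = 1 then 2 * x $ 1 + x $ 3
     else x $ i + (if i + 2 < n then x $ (i + 2) else 0))"
    using B_mat_mult_vec_nth[OF n _ i] last x i n by (simp add: numeral_eq_Suc)
  ultimately show "vec_last (D_adj n *\<^sub>v x) (n - 1) $ i = (B_mat n *\<^sub>v vec_last x (n - 1)) $ i"
    using D_adj_mult_vec_nth[OF n x, of "Suc i"] i twins by (simp add: numeral_eq_Suc)
qed (use B_mat_carrier[of n] in simp)

lemma hat_W_walk_matrix_eqI:
  assumes A: "A \<in> carrier_mat n n" and B: "B \<in> carrier_mat (n - 1) (n - 1)"
    and tails: "\<And>j. vec_last (A ^\<^sub>m j *\<^sub>v ones_vec n) (n - 1) = B ^\<^sub>m j *\<^sub>v ones_vec (n - 1)"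
  shows "hat_W (walk_matrix A) = walk_matrix B"
proof (rule eq_matI)
  fix i j
  assume "i < dim_row (walk_matrix B)" "j < dim_col (walk_matrix B)"
  then have ij: "i < n - 1" "j < n - 1"
    using B by (simp_all add: walk_matrix_def Let_def)
  have "(A ^\<^sub>m j *\<^sub>v ones_vec n) $ Suc i = vec_last (A ^\<^sub>m j *\<^sub>v ones_vec n) (n - 1) $ i"
    using A ij by (simp add: vec_last_def)
  then show "hat_W (walk_matrix A) $$ (i, j) = walk_matrix B $$ (i, j)"
    using A B ij tails by (simp add: hat_W_def walk_matrix_def Let_def)
qed (use A B in \<open>simp_all add: hat_W_def walk_matrix_def Let_def\<close>)

theorem lemma2p1:
  fixes n :: nat
  assumes "n \<ge> 4"
  shows "hat_W (walk_matrix (D_adj n)) = walk_matrix (B_mat n)"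
proof (rule hat_W_walk_matrix_eqI[OF D_adj_carrier B_mat_carrier])
  fix j
  have "ones_vec n \<in> carrier_vec n" "ones_vec n $ 0 = ones_vec n $ 1"
    using assms by (simp_all add: ones_vec_def)
  then have "vec_last (D_adj n ^\<^sub>m j *\<^sub>v ones_vec n) (n - 1) =
      B_mat n ^\<^sub>m j *\<^sub>v vec_last (ones_vec n) (n - 1)"
    using D_adj_mult_vec_twins vec_last_D_adj_mult_vec assms
    by (intro pow_mat_mult_vec_intertwine[OF D_adj_carrier B_mat_carrier, where P = "\<lambda>x. x $ 0 = x $ 1"])
      auto
  moreover have "vec_last (ones_vec n) (n - 1) = ones_vec (n - 1)"
    unfolding ones_vec_def vec_last_def by auto
  ultimately show "vec_last (D_adj n ^\<^sub>m j *\<^sub>v ones_vec n) (n - 1) = B_mat n ^\<^sub>m j *\<^sub>v ones_vec (n - 1)"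
    by simp
qed

end
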